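(* Let $d,n,k\in\mathbb{N}^+$. Let $S_n=2^{-n+3}\{0,1,\dots,\lfloor 2^n n^{-2}\rfloor\}^d\subset\mathbb{R}^d$ and $s_n=\#S_n$. Let $\{X_i\}_{i\ge1}$ be i.i.d. random variables, each uniformly distributed on $S_n$ (i.e. $\Pr(X_i=y)=1/s_n$ for every $y\in S_n$), and let $\mathcal{F}_i=\sigma(X_j:1\le j\le i-1)$, with $\mathcal{F}_1$ trivial. Then there exists $\ell\in\mathbb{N}^+$ such that for every sequence $\{y_i\}_{i\ge1}$ of $\mathbb{R}^d$-valued random variables with $y_i$ being $\mathcal{F}_i$-measurable for each $i$, we have \[ \Pr\left(N_n\left(\bigcup_{i=1}^{\ell}\{X_i+y_i\}\right)<s_n\right)\le\frac{1}{k\,2^n}. \]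
   Context: For a subset $X\subset\mathbb{R}^d$ (Euclidean metric), $N_n(X)$ denotes the maximal cardinality of a subset $S\subset X$ such that any two distinct points of $S$ are at distance $>2^{-n}$. $\lfloor x\rfloor$ is the integer part of $x$. *)

theory Defs
  imports "HOL-Probability.Probability"
begin

text \<open>N_n(X): maximal cardinality of a subset of X whose distinct points are at
  distance > 2^(-n). (Used only for finite X, where the maximum exists.)\<close>
definition sep_number :: "nat \<Rightarrow> ('a::metric_space) set \<Rightarrow> nat" where
  "sep_number n X = Max {card S | S. S \<subseteq> X \<and> finite S \<and>
      (\<forall>x\<in>S. \<forall>y\<in>S. x \<noteq> y \<longrightarrow> dist x y > 2 powr (- real n))}"

definition grid_set :: "nat \<Rightarrow> (real ^ 'd) set" where
  "grid_set n = {(2 powr (3 - real n)) *\<^sub>R (\<chi> i. real (f i)) | f.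
      \<forall>i. f i \<le> nat \<lfloor>2 ^ n / (real n)\<^sup>2\<rfloor>}"

definition past_sigma :: "'a measure \<Rightarrow> (nat \<Rightarrow> 'a \<Rightarrow> 'b::topological_space) \<Rightarrow> nat \<Rightarrow> 'a measure" where
  "past_sigma M X i = sigma (space M)
      (\<Union>j\<in>{1..<i}. {X j -` A \<inter> space M | A. A \<in> sets borel})"

end

theory Submission
  imports Defs
begin

text \<open>Let s be the number of grid points, L = 2s, and for finite Q put
  \<Phi>(Q) = L^(s - N_n(Q)) while N_n(Q) < s, and \<Phi>(Q) = 0 otherwise.
  Distinct grid points are 8 * 2^-n apart, so for a finite P and any shift c at most N_n(P)
  of the s translates x + c (x a grid point) fail to raise N_n: each lies within 2^-n of a
  maximal separated subset of P, and no two of them can be close to the same point of it.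
  Each of the other translates divides \<Phi> by L, so averaging \<Phi>(P \<union> {X + c}) over a uniform
  grid point X multiplies \<Phi>(P) by at most (s - 1/2)/s. Since y_i depends only on
  X_1, ..., X_(i-1), this can be iterated over the atoms of (X_1, ..., X_l), giving
  E \<Phi>(P_l) \<le> ((s - 1/2)/s)^l L^s for P_l = {X_i + y_i | i \<le> l}; as \<Phi> \<ge> 1 on the event
  N_n(P_l) < s, its probability tends to 0 as l grows.\<close>

section \<open>Separation numbers\<close>

definition separated :: "nat \<Rightarrow> ('a::metric_space) set \<Rightarrow> bool" where
  "separated n S \<longleftrightarrow> (\<forall>x\<in>S. \<forall>y\<in>S. x \<noteq> y \<longrightarrow> dist x y > 2 powr (- real n))"

lemma sep_number_eq_Max_separated:
  "sep_number n Q = Max {card S | S. S \<subseteq> Q \<and> finite S \<and> separated n S}"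
  unfolding sep_number_def separated_def by simp

lemma finite_separated_cards:
  assumes "finite Q"
  shows "finite {card S | S. S \<subseteq> Q \<and> finite S \<and> separated n S}"
proof -
  have "{card S | S. S \<subseteq> Q \<and> finite S \<and> separated n S} \<subseteq> {..card Q}"
    using assms by (auto intro: card_mono)
  then show ?thesis
    using finite_subset by blast
qed

lemma card_separated_le_sep_number:
  assumes "finite Q" "T \<subseteq> Q" "separated n T"
  shows "card T \<le> sep_number n Q"
  unfolding sep_number_eq_Max_separated
  using assms finite_separated_cards[OF assms(1)] finite_subset by (intro Max_ge) auto

lemma sep_number_attained:
  assumes "finite Q"
  obtains T where "T \<subseteq> Q" "finite T" "separated n T" "card T = sep_number n Q"
proof -
  have "card {} \<in> {card S | S. S \<subseteq> Q \<and> finite S \<and> separated n S}"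
    by (rule CollectI, rule exI[of _ "{}"]) (simp add: separated_def)
  then have "sep_number n Q \<in> {card S | S. S \<subseteq> Q \<and> finite S \<and> separated n S}"
    unfolding sep_number_eq_Max_separated using finite_separated_cards[OF assms]
    by (intro Max_in) auto
  then obtain T where "T \<subseteq> Q" "finite T" "separated n T" "sep_number n Q = card T"
    by auto
  then show ?thesis
    using that by simp
qed

lemma sep_number_mono:
  assumes "finite Q'" "Q \<subseteq> Q'"
  shows "sep_number n Q \<le> sep_number n Q'"
proof -
  have "finite Q"
    using assms(2,1) by (rule finite_subset)
  then obtain T where "T \<subseteq> Q" "separated n T" "card T = sep_number n Q"
    by (rule sep_number_attained)
  then show ?thesis
    using card_separated_le_sep_number[of Q' T n] assms by simp
qed

lemma sep_number_empty [simp]: "sep_number n {} = 0"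
  by (rule sep_number_attained[of "{}" n]) auto

section \<open>The grid\<close>

lemma finite_grid_set: "finite (grid_set n :: (real ^ 'd) set)"
proof -
  define N where "N = nat \<lfloor>2 ^ n / (real n)\<^sup>2\<rfloor>"
  have "(grid_set n :: (real ^ 'd) set)
      = (\<lambda>f. (2 powr (3 - real n)) *\<^sub>R (\<chi> i. real (f i))) ` ((UNIV :: 'd set) \<rightarrow>\<^sub>E {..N})"
    unfolding grid_set_def N_def by (auto simp: PiE_UNIV_domain)
  then show ?thesis
    by (simp add: finite_PiE)
qed

lemma zero_in_grid_set: "(0 :: real ^ 'd) \<in> grid_set n"
  unfolding grid_set_def by (rule CollectI, rule exI[of _ "\<lambda>_. 0"]) (auto simp: vec_eq_iff)

lemma card_grid_set_ge_1: "card (grid_set n :: (real ^ 'd) set) \<ge> 1"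
  using finite_grid_set[where 'd='d] zero_in_grid_set[where 'd='d, of n]
  by (auto simp: Suc_le_eq card_gt_0_iff)

lemma grid_set_dist_ge:
  assumes "x \<in> (grid_set n :: (real ^ 'd) set)" "x' \<in> grid_set n" "x \<noteq> x'"
  shows "dist x x' \<ge> 2 powr (3 - real n)"
proof -
  define a where "a = (2::real) powr (3 - real n)"
  obtain f g where x: "x = a *\<^sub>R (\<chi> i. real (f i))" and x': "x' = a *\<^sub>R (\<chi> i. real (g i))"
    using assms(1,2) unfolding grid_set_def a_def by auto
  obtain i where "f i \<noteq> g i"
    using assms(3) x x' by (metis vec_lambda_unique)
  then have "a \<le> a * \<bar>real (f i) - real (g i)\<bar>"
    by (simp add: a_def)
  also have "\<dots> = \<bar>(x - x') $ i\<bar>"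
    using x x' by (simp add: a_def abs_mult flip: right_diff_distrib)
  also have "\<dots> \<le> norm (x - x')"
    by (rule component_le_norm_cart)
  finally show ?thesis
    by (simp add: dist_norm a_def)
qed

lemma grid_set_dist_gt:
  assumes "x \<in> (grid_set n :: (real ^ 'd) set)" "x' \<in> grid_set n" "x \<noteq> x'"
  shows "dist x x' > 2 * 2 powr (- real n)"
proof -
  have "2 * 2 powr (- real n) < 2 powr (3 - real n)"
    by (simp add: powr_diff powr_minus divide_simps)
  then show ?thesis
    using grid_set_dist_ge[OF assms] by linarith
qed

section \<open>The potential\<close>

lemma card_translates_not_increasing_sep_number:
  fixes G P :: "('a::real_normed_vector) set"
  assumes "finite P"
    and G_sep: "\<And>x x'. x \<in> G \<Longrightarrow> x' \<in> G \<Longrightarrow> x \<noteq> x' \<Longrightarrow> dist x x' > 2 * 2 powr (- real n)"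
  shows "card {x\<in>G. sep_number n (P \<union> {x + c}) \<le> sep_number n P} \<le> sep_number n P"
proof -
  define \<delta> where "\<delta> = (2::real) powr (- real n)"
  obtain T where T: "T \<subseteq> P" "finite T" "separated n T" "card T = sep_number n P"
    using sep_number_attained[OF \<open>finite P\<close>] by blast
  define B where "B = {x\<in>G. sep_number n (P \<union> {x + c}) \<le> sep_number n P}"
  have near: "\<exists>t\<in>T. dist (x + c) t \<le> \<delta>" if "x \<in> B" for x
  proof (rule ccontr)
    assume "\<not> ?thesis"
    then have far: "\<forall>t\<in>T. dist (x + c) t > \<delta>"
      by auto
    then have "x + c \<notin> T"
      by (force simp: \<delta>_def)
    moreover have "separated n (insert (x + c) T)"
      using T(3) far unfolding separated_def \<delta>_def by (auto simp: dist_commute)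
    then have "card (insert (x + c) T) \<le> sep_number n (P \<union> {x + c})"
      using T(1) \<open>finite P\<close> by (intro card_separated_le_sep_number) auto
    ultimately show False
      using that T(2,4) unfolding B_def by simp
  qed
  then obtain h where h: "\<And>x. x \<in> B \<Longrightarrow> h x \<in> T \<and> dist (x + c) (h x) \<le> \<delta>"
    by metis
  have "inj_on h B"
  proof (rule inj_onI)
    fix x x' assume xx: "x \<in> B" "x' \<in> B" "h x = h x'"
    have "dist x x' = dist (x + c) (x' + c)"
      by (simp add: dist_norm)
    also have "\<dots> \<le> dist (x + c) (h x) + dist (x' + c) (h x')"
      using xx(3) by (metis dist_commute dist_triangle)
    also have "\<dots> \<le> 2 * \<delta>"
      using h[OF xx(1)] h[OF xx(2)] by linarith
    finally show "x = x'"
      using G_sep xx(1,2) unfolding B_def \<delta>_def by force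
  qed
  then have "card B \<le> card T"
    using h T(2) by (intro card_inj_on_le) auto
  then show ?thesis
    using T(4) unfolding B_def by simp
qed

definition potential :: "nat \<Rightarrow> nat \<Rightarrow> real \<Rightarrow> ('a::metric_space) set \<Rightarrow> real" where
  "potential n s L Q = (if sep_number n Q < s then L ^ (s - sep_number n Q) else 0)"

lemma potential_nonneg: "L \<ge> 0 \<Longrightarrow> potential n s L Q \<ge> 0"
  unfolding potential_def by auto

lemma one_le_potential:
  assumes "L \<ge> 1" "sep_number n Q < s"
  shows "1 \<le> potential n s L Q"
  using assms unfolding potential_def by (simp add: one_le_power)

lemma potential_le_power:
  assumes "L \<ge> 1" "m \<le> sep_number n Q"
  shows "potential n s L Q \<le> L ^ (s - m)"
  using assms unfolding potential_def by (auto intro!: power_increasing)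

lemma sum_potential_translates_le:
  fixes G P :: "('a::real_normed_vector) set"
  assumes "finite P" "finite G" "card G = s" "L \<ge> 1"
    and G_sep: "\<And>x x'. x \<in> G \<Longrightarrow> x' \<in> G \<Longrightarrow> x \<noteq> x' \<Longrightarrow> dist x x' > 2 * 2 powr (- real n)"
  shows "(\<Sum>x\<in>G. potential n s L (P \<union> {x + c})) \<le> (real s - 1 + real s / L) * potential n s L P"
proof -
  define m where "m = sep_number n P"
  have m_le: "m \<le> sep_number n (P \<union> {x + c})" for x
    unfolding m_def using \<open>finite P\<close> by (intro sep_number_mono) auto
  show ?thesis
  proof (cases "m < s")
    case False
    then have "potential n s L (P \<union> {x + c}) = 0" for x
      using m_le[of x] by (simp add: potential_def)
    moreover have "potential n s L P = 0"
      using False by (simp add: potential_def m_def)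
    ultimately show ?thesis
      by simp
  next
    case True
    define B where "B = {x\<in>G. sep_number n (P \<union> {x + c}) \<le> m}"
    have "B \<subseteq> G" "finite B"
      using \<open>finite G\<close> unfolding B_def by auto
    have card_B: "card B \<le> m"
      using card_translates_not_increasing_sep_number[OF \<open>finite P\<close> G_sep, where c=c]
      unfolding B_def m_def by simp
    have "(\<Sum>x\<in>G. potential n s L (P \<union> {x + c}))
        = (\<Sum>x\<in>B. potential n s L (P \<union> {x + c})) + (\<Sum>x\<in>G - B. potential n s L (P \<union> {x + c}))"
      using sum.subset_diff[OF \<open>B \<subseteq> G\<close> \<open>finite G\<close>, of "\<lambda>x. potential n s L (P \<union> {x + c})"] by linarith
    also have "\<dots> \<le> (\<Sum>x\<in>B. L ^ (s - m)) + (\<Sum>x\<in>G - B. L ^ (s - Suc m))"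
    proof (intro add_mono sum_mono potential_le_power)
      fix x assume "x \<in> G - B"
      then show "Suc m \<le> sep_number n (P \<union> {x + c})"
        unfolding B_def by auto
    qed (use \<open>L \<ge> 1\<close> m_le in auto)
    also have "\<dots> = real (card B) * L ^ (s - m) + real (card (G - B)) * L ^ (s - Suc m)"
      by simp
    also have "\<dots> \<le> real m * L ^ (s - m) + real s * L ^ (s - Suc m)"
    proof (intro add_mono mult_right_mono)
      show "real (card (G - B)) \<le> real s"
        using \<open>card G = s\<close> \<open>finite G\<close> by (simp add: card_Diff_subset[OF \<open>finite B\<close> \<open>B \<subseteq> G\<close>])
    qed (use card_B \<open>L \<ge> 1\<close> in auto)
    also have "\<dots> = (real m + real s / L) * L ^ (s - m)"
    proof -
      have "s - m = Suc (s - Suc m)"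
        using True by simp
      then have "L ^ (s - m) = L * L ^ (s - Suc m)"
        by simp
      then show ?thesis
        using \<open>L \<ge> 1\<close> by (simp add: field_simps)
    qed
    also have "\<dots> \<le> (real s - 1 + real s / L) * L ^ (s - m)"
      using True \<open>L \<ge> 1\<close> by (intro mult_right_mono) auto
    also have "L ^ (s - m) = potential n s L P"
      using True by (simp add: potential_def m_def)
    finally show ?thesis .
  qed
qed

section \<open>Predictable shifts of uniform samples\<close>

lemma sum_PiE_insert:
  assumes "k \<notin> I"
  shows "(\<Sum>a\<in>PiE (insert k I) (\<lambda>_. T). f a) = (\<Sum>b\<in>PiE I (\<lambda>_. T). \<Sum>x\<in>T. f (b(k := x)))"
proof -
  have "(\<Sum>a\<in>PiE (insert k I) (\<lambda>_. T). f a)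
      = (\<Sum>a\<in>(\<lambda>(x, b). b(k := x)) ` (T \<times> PiE I (\<lambda>_. T)). f a)"
    by (simp add: PiE_insert_eq)
  also have "\<dots> = (\<Sum>(x, b)\<in>T \<times> PiE I (\<lambda>_. T). f (b(k := x)))"
    using inj_combinator[OF assms, of "\<lambda>_. T"] by (simp add: sum.reindex case_prod_unfold)
  also have "\<dots> = (\<Sum>b\<in>PiE I (\<lambda>_. T). \<Sum>x\<in>T. f (b(k := x)))"
    by (subst sum.cartesian_product[symmetric]) (rule sum.swap)
  finally show ?thesis .
qed

lemma past_sigma_measurable_eq:
  fixes f :: "'a \<Rightarrow> 'c::t1_space"
  assumes f: "f \<in> measurable (past_sigma M X i) borel"
    and "\<omega> \<in> space M" "\<omega>' \<in> space M" and past_eq: "\<forall>j\<in>{1..<i}. X j \<omega> = X j \<omega>'"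
  shows "f \<omega> = f \<omega>'"
proof -
  define E where "E = (\<Union>j\<in>{1..<i}. {X j -` A \<inter> space M | A. A \<in> sets (borel :: 'b measure)})"
  have "E \<subseteq> Pow (space M)"
    unfolding E_def by auto
  then have sets_past: "sets (past_sigma M X i) = sigma_sets (space M) E"
    and space_past: "space (past_sigma M X i) = space M"
    unfolding past_sigma_def E_def by simp_all
  have separates: "\<omega> \<in> A \<longleftrightarrow> \<omega>' \<in> A" if "A \<in> sigma_sets (space M) E" for A
    using that
  proof (induction rule: sigma_sets.induct)
    case (Basic A)
    then show ?case
      using past_eq \<open>\<omega> \<in> space M\<close> \<open>\<omega>' \<in> space M\<close> unfolding E_def by auto
  next
    case (Compl A)
    then show ?case
      using \<open>\<omega> \<in> space M\<close> \<open>\<omega>' \<in> space M\<close> by auto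
  qed auto
  have "f -` {f \<omega>} \<inter> space M \<in> sigma_sets (space M) E"
    using measurable_sets[OF f, of "{f \<omega>}"] by (simp add: sets_past space_past)
  from separates[OF this] \<open>\<omega> \<in> space M\<close> show ?thesis
    by simp
qed

locale predictable_shifts_of_uniform_samples = prob_space M
  for M :: "'a measure" +
  fixes G :: "'b::real_normed_vector set" and n :: nat
    and X :: "nat \<Rightarrow> 'a \<Rightarrow> 'b" and y :: "nat \<Rightarrow> 'a \<Rightarrow> 'b"
  assumes finite_G: "finite G" and G_nonempty: "G \<noteq> {}"
    and G_separated: "\<And>x x'. x \<in> G \<Longrightarrow> x' \<in> G \<Longrightarrow> x \<noteq> x' \<Longrightarrow> dist x x' > 2 * 2 powr (- real n)"
    and X_measurable: "\<And>i. i \<ge> 1 \<Longrightarrow> X i \<in> borel_measurable M"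
    and X_indep: "indep_vars (\<lambda>_. borel) X {1..}"
    and X_uniform: "\<And>i v. i \<ge> 1 \<Longrightarrow> v \<in> G \<Longrightarrow> prob {\<omega> \<in> space M. X i \<omega> = v} = 1 / real (card G)"
    and y_predictable: "\<And>i. i \<ge> 1 \<Longrightarrow> y i \<in> measurable (past_sigma M X i) borel"
begin

abbreviation pot :: "'b set \<Rightarrow> real" where
  "pot \<equiv> potential n (card G) (2 * real (card G))"

definition points :: "nat \<Rightarrow> 'a \<Rightarrow> 'b set" where
  "points i \<omega> = (\<Union>j\<in>{1..i}. {X j \<omega> + y j \<omega>})"

definition atom :: "nat \<Rightarrow> (nat \<Rightarrow> 'b) \<Rightarrow> 'a set" where
  "atom i a = {\<omega> \<in> space M. \<forall>j\<in>{1..i}. X j \<omega> = a j}"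

text \<open>The points are constant on each atom (the shifts are predictable), so the potential
  may be evaluated at an arbitrary representative.\<close>
definition weight :: "nat \<Rightarrow> (nat \<Rightarrow> 'b) \<Rightarrow> real" where
  "weight i a = pot (points i (SOME \<omega>. \<omega> \<in> atom i a))"

lemma card_G_ge_1: "card G \<ge> 1"
  using finite_G G_nonempty by (simp add: Suc_le_eq card_gt_0_iff)

lemma finite_points: "finite (points i \<omega>)"
  unfolding points_def by auto

lemma points_Suc: "points (Suc i) \<omega> = points i \<omega> \<union> {X (Suc i) \<omega> + y (Suc i) \<omega>}"
  unfolding points_def by (auto simp: atLeastAtMostSuc_conv)

lemma X_singleton_events: "i \<ge> 1 \<Longrightarrow> X i -` {v} \<inter> space M \<in> events"
  using X_measurable by (intro measurable_sets) auto

lemma atom_eq_INT: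
  assumes "i \<ge> 1"
  shows "atom i a = (\<Inter>j\<in>{1..i}. X j -` {a j} \<inter> space M)"
  using assms unfolding atom_def by auto

lemma atom_events: "atom i a \<in> events"
proof (cases "i = 0")
  case True
  then show ?thesis
    by (simp add: atom_def)
next
  case False
  then have "i \<ge> 1"
    by simp
  then show ?thesis
    unfolding atom_eq_INT[OF \<open>i \<ge> 1\<close>] by (intro sets.finite_INT) (auto simp: X_singleton_events)
qed

lemma prob_atom:
  assumes "a \<in> PiE {1..i} (\<lambda>_. G)"
  shows "prob (atom i a) = (1 / real (card G)) ^ i"
proof (cases "i = 0")
  case True
  then show ?thesis
    by (simp add: atom_def prob_space)
next
  case False
  then have "i \<ge> 1"
    by simp
  then have "prob (atom i a) = (\<Prod>j\<in>{1..i}. prob (X j -` {a j} \<inter> space M))"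
    unfolding atom_eq_INT[OF \<open>i \<ge> 1\<close>] by (intro indep_varsD[OF X_indep]) auto
  also have "\<dots> = (\<Prod>j\<in>{1..i}. 1 / real (card G))"
  proof (rule prod.cong[OF refl])
    fix j assume "j \<in> {1..i}"
    then have "j \<ge> 1" "a j \<in> G"
      using assms by auto
    moreover have "X j -` {a j} \<inter> space M = {\<omega> \<in> space M. X j \<omega> = a j}"
      by auto
    ultimately show "prob (X j -` {a j} \<inter> space M) = 1 / real (card G)"
      by (simp add: X_uniform)
  qed
  finally show ?thesis
    by simp
qed

lemma some_in_atom:
  assumes "a \<in> PiE {1..i} (\<lambda>_. G)"
  shows "(SOME \<omega>. \<omega> \<in> atom i a) \<in> atom i a"
proof -
  have "prob (atom i a) \<noteq> 0"
    using prob_atom[OF assms] card_G_ge_1 by simp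
  then have "atom i a \<noteq> {}"
    by auto
  then show ?thesis
    by (simp add: some_in_eq)
qed

lemma y_eq_if_past_eq:
  assumes "j \<ge> 1" "\<omega> \<in> space M" "\<omega>' \<in> space M" "\<forall>k\<in>{1..<j}. X k \<omega> = X k \<omega>'"
  shows "y j \<omega> = y j \<omega>'"
  by (rule past_sigma_measurable_eq[OF y_predictable[OF assms(1)] assms(2-4)])

lemma points_eq_if_past_eq:
  assumes "\<omega> \<in> space M" "\<omega>' \<in> space M" "\<forall>j\<in>{1..i}. X j \<omega> = X j \<omega>'"
  shows "points i \<omega> = points i \<omega>'"
proof -
  have "y j \<omega> = y j \<omega>'" if "j \<in> {1..i}" for j
    using that assms by (intro y_eq_if_past_eq) auto
  then show ?thesis
    using assms(3) unfolding points_def by auto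
qed

lemma weight_eq:
  assumes "a \<in> PiE {1..i} (\<lambda>_. G)" "\<omega> \<in> atom i a"
  shows "weight i a = pot (points i \<omega>)"
proof -
  define \<omega>\<^sub>0 where "\<omega>\<^sub>0 = (SOME \<omega>. \<omega> \<in> atom i a)"
  have "\<omega>\<^sub>0 \<in> atom i a"
    unfolding \<omega>\<^sub>0_def using assms(1) by (rule some_in_atom)
  then have "points i \<omega>\<^sub>0 = points i \<omega>"
    using assms(2) by (intro points_eq_if_past_eq) (auto simp: atom_def)
  then show ?thesis
    by (simp add: weight_def \<omega>\<^sub>0_def)
qed

lemma weight_nonneg: "weight i a \<ge> 0"
  unfolding weight_def by (rule potential_nonneg) simp

lemma sum_weight_fun_upd_le:
  assumes b: "b \<in> PiE {1..i} (\<lambda>_. G)"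
  shows "(\<Sum>x\<in>G. weight (Suc i) (b(Suc i := x))) \<le> (real (card G) - 1/2) * weight i b"
proof -
  define \<omega> where "\<omega> = (SOME \<omega>. \<omega> \<in> atom i b)"
  have \<omega>: "\<omega> \<in> atom i b"
    unfolding \<omega>_def using b by (rule some_in_atom)
  have "weight (Suc i) (b(Suc i := x)) = pot (points i \<omega> \<union> {x + y (Suc i) \<omega>})" if "x \<in> G" for x
  proof -
    have b': "b(Suc i := x) \<in> PiE {1..Suc i} (\<lambda>_. G)"
      using b that by (auto simp: PiE_iff extensional_def)
    define \<omega>' where "\<omega>' = (SOME \<omega>. \<omega> \<in> atom (Suc i) (b(Suc i := x)))"
    have \<omega>': "\<omega>' \<in> atom (Suc i) (b(Suc i := x))"
      unfolding \<omega>'_def using b' by (rule some_in_atom)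
    have past: "\<forall>j\<in>{1..i}. X j \<omega>' = X j \<omega>"
      using \<omega> \<omega>' by (auto simp: atom_def)
    have "points i \<omega>' = points i \<omega>"
      using \<omega> \<omega>' past by (intro points_eq_if_past_eq) (auto simp: atom_def)
    moreover have "y (Suc i) \<omega>' = y (Suc i) \<omega>"
      using \<omega> \<omega>' past by (intro y_eq_if_past_eq) (auto simp: atom_def)
    moreover have "X (Suc i) \<omega>' = x"
      using \<omega>' by (auto simp: atom_def)
    ultimately show ?thesis
      using weight_eq[OF b' \<omega>'] by (simp add: points_Suc)
  qed
  then have "(\<Sum>x\<in>G. weight (Suc i) (b(Suc i := x))) = (\<Sum>x\<in>G. pot (points i \<omega> \<union> {x + y (Suc i) \<omega>}))"
    by (rule sum.cong[OF refl])
  also have "\<dots> \<le> (real (card G) - 1 + real (card G) / (2 * real (card G))) * pot (points i \<omega>)"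
    using card_G_ge_1 by (intro sum_potential_translates_le finite_points finite_G G_separated) auto
  also have "\<dots> = (real (card G) - 1/2) * weight i b"
    using card_G_ge_1 weight_eq[OF b \<omega>] by simp
  finally show ?thesis .
qed

lemma sum_weight_le:
  "(\<Sum>a\<in>PiE {1..i} (\<lambda>_. G). weight i a) \<le> (real (card G) - 1/2) ^ i * (2 * real (card G)) ^ card G"
proof (induction i)
  case 0
  show ?case
    using card_G_ge_1 by (simp add: weight_def points_def potential_def)
next
  case (Suc i)
  have "(\<Sum>a\<in>PiE {1..Suc i} (\<lambda>_. G). weight (Suc i) a)
      = (\<Sum>b\<in>PiE {1..i} (\<lambda>_. G). \<Sum>x\<in>G. weight (Suc i) (b(Suc i := x)))"
    using sum_PiE_insert[of "Suc i" "{1..i}"] by (simp add: atLeastAtMostSuc_conv)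
  also have "\<dots> \<le> (\<Sum>b\<in>PiE {1..i} (\<lambda>_. G). (real (card G) - 1/2) * weight i b)"
    by (intro sum_mono sum_weight_fun_upd_le)
  also have "\<dots> \<le> (real (card G) - 1/2) * ((real (card G) - 1/2) ^ i * (2 * real (card G)) ^ card G)"
    using Suc.IH card_G_ge_1 by (simp add: sum_distrib_left[symmetric] mult_left_mono)
  finally show ?case
    by simp
qed

lemma prob_X_in_G:
  assumes "i \<ge> 1"
  shows "prob (X i -` G \<inter> space M) = 1"
proof -
  have "X i -` G \<inter> space M = (\<Union>v\<in>G. X i -` {v} \<inter> space M)"
    by auto
  moreover have "prob (\<Union>v\<in>G. X i -` {v} \<inter> space M) = (\<Sum>v\<in>G. prob (X i -` {v} \<inter> space M))"
    using finite_G X_singleton_events[OF assms]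
    by (intro finite_measure_finite_Union) (auto simp: disjoint_family_on_def)
  ultimately have "prob (X i -` G \<inter> space M) = (\<Sum>v\<in>G. prob (X i -` {v} \<inter> space M))"
    by simp
  also have "\<dots> = (\<Sum>v\<in>G. 1 / real (card G))"
  proof (rule sum.cong[OF refl])
    fix v assume "v \<in> G"
    moreover have "X i -` {v} \<inter> space M = {\<omega> \<in> space M. X i \<omega> = v}"
      by auto
    ultimately show "prob (X i -` {v} \<inter> space M) = 1 / real (card G)"
      using X_uniform[OF assms] by simp
  qed
  also have "\<dots> = 1"
    using card_G_ge_1 by simp
  finally show ?thesis .
qed

lemma AE_X_in_G: "AE \<omega> in M. \<forall>j\<in>{1..l}. X j \<omega> \<in> G"
proof (rule AE_finite_allI)
  fix j assume "j \<in> {1..l}"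
  then have "AE \<omega> in M. \<omega> \<in> X j -` G \<inter> space M"
    by (intro AE_prob_1 prob_X_in_G) simp
  then show "AE \<omega> in M. X j \<omega> \<in> G"
    by eventually_elim simp
qed simp

lemma prob_sep_number_less_le:
  "prob {\<omega> \<in> space M. sep_number n (points l \<omega>) < card G}
    \<le> ((real (card G) - 1/2) / real (card G)) ^ l * (2 * real (card G)) ^ card G"
proof -
  define P where "P = PiE {1..l} (\<lambda>_. G)"
  define A where "A = {a \<in> P. 1 \<le> weight l a}"
  have "finite P"
    using finite_G by (simp add: P_def finite_PiE)
  then have "finite A" "A \<subseteq> P"
    unfolding A_def by auto
  have "AE \<omega> in M. \<omega> \<in> {\<omega> \<in> space M. sep_number n (points l \<omega>) < card G} \<longrightarrow> \<omega> \<in> (\<Union>a\<in>A. atom l a)"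
    using AE_X_in_G[of l]
  proof eventually_elim
    case (elim \<omega>)
    show ?case
    proof
      assume \<omega>: "\<omega> \<in> {\<omega> \<in> space M. sep_number n (points l \<omega>) < card G}"
      define a where "a = restrict (\<lambda>j. X j \<omega>) {1..l}"
      have "a \<in> P"
        using elim by (simp add: a_def P_def)
      moreover have "\<omega> \<in> atom l a"
        using \<omega> by (simp add: atom_def a_def)
      moreover have "1 \<le> weight l a"
        using weight_eq[OF \<open>a \<in> P\<close>[unfolded P_def] \<open>\<omega> \<in> atom l a\<close>] \<omega> card_G_ge_1
        by (simp add: one_le_potential)
      ultimately show "\<omega> \<in> (\<Union>a\<in>A. atom l a)"
        unfolding A_def by blast
    qed
  qed
  then have "prob {\<omega> \<in> space M. sep_number n (points l \<omega>) < card G} \<le> prob (\<Union>a\<in>A. atom l a)"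
    using \<open>finite A\<close> atom_events by (intro finite_measure_mono_AE sets.finite_UN) auto
  also have "\<dots> \<le> (\<Sum>a\<in>A. prob (atom l a))"
    using \<open>finite A\<close> atom_events by (intro finite_measure_subadditive_finite) auto
  also have "\<dots> \<le> (\<Sum>a\<in>A. weight l a * (1 / real (card G)) ^ l)"
  proof (rule sum_mono)
    fix a assume "a \<in> A"
    then show "prob (atom l a) \<le> weight l a * (1 / real (card G)) ^ l"
      using mult_right_mono[of 1 "weight l a" "(1 / real (card G)) ^ l"]
      by (simp add: prob_atom A_def P_def)
  qed
  also have "\<dots> \<le> (\<Sum>a\<in>P. weight l a * (1 / real (card G)) ^ l)"
    using \<open>finite P\<close> \<open>A \<subseteq> P\<close> weight_nonneg by (intro sum_mono2) auto
  also have "\<dots> = (\<Sum>a\<in>P. weight l a) * (1 / real (card G)) ^ l"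
    by (simp add: sum_distrib_right)
  also have "\<dots> \<le> ((real (card G) - 1/2) ^ l * (2 * real (card G)) ^ card G) * (1 / real (card G)) ^ l"
    using sum_weight_le unfolding P_def by (rule mult_right_mono) simp
  finally show ?thesis
    by (simp add: power_divide)
qed

end

lemma grid_samples_with_predictable_shifts:
  fixes X y :: "nat \<Rightarrow> 'a \<Rightarrow> real ^ 'd"
  assumes "prob_space M"
    and "\<And>i. i \<ge> 1 \<Longrightarrow> X i \<in> borel_measurable M"
    and "prob_space.indep_vars M (\<lambda>_. borel) X {1..}"
    and "\<And>i v. i \<ge> 1 \<Longrightarrow> v \<in> (grid_set n :: (real ^ 'd) set) \<Longrightarrow>
            measure M {\<omega> \<in> space M. X i \<omega> = v} = 1 / real (card (grid_set n :: (real ^ 'd) set))"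
    and "\<And>i. i \<ge> 1 \<Longrightarrow> y i \<in> measurable (past_sigma M X i) borel"
  shows "predictable_shifts_of_uniform_samples M (grid_set n) n X y"
proof (intro predictable_shifts_of_uniform_samples.intro predictable_shifts_of_uniform_samples_axioms.intro)
  show "finite (grid_set n :: (real ^ 'd) set)"
    by (rule finite_grid_set)
  show "grid_set n \<noteq> ({} :: (real ^ 'd) set)"
    using zero_in_grid_set by blast
  show "dist x x' > 2 * 2 powr (- real n)"
    if "x \<in> grid_set n" "x' \<in> grid_set n" "x \<noteq> x'" for x x' :: "real ^ 'd"
    using that by (rule grid_set_dist_gt)
qed (fact assms)+

lemma exists_power_mult_le:
  fixes q K \<epsilon> :: real
  assumes "\<bar>q\<bar> < 1" "\<epsilon> > 0"
  obtains l :: nat where "l \<ge> 1" "q ^ l * K \<le> \<epsilon>"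
proof -
  have "(\<lambda>l. q ^ l * K) \<longlonglongrightarrow> 0"
    using assms(1) by (intro tendsto_mult_left_zero LIMSEQ_power_zero) simp
  then have "eventually (\<lambda>l. q ^ l * K < \<epsilon>) sequentially"
    using assms(2) by (rule order_tendstoD)
  then obtain N where N: "\<And>l. l \<ge> N \<Longrightarrow> q ^ l * K < \<epsilon>"
    by (auto simp: eventually_sequentially)
  have "q ^ Suc N * K < \<epsilon>"
    by (rule N) simp
  then show ?thesis
    by (intro that[of "Suc N"]) auto
qed

theorem mainTheorem8:
  fixes M :: "'a measure" and X :: "nat \<Rightarrow> 'a \<Rightarrow> real ^ 'd" and n k :: nat
  assumes "prob_space M"
    and "n \<ge> 1" and "k \<ge> 1"
    and "\<And>i. i \<ge> 1 \<Longrightarrow> X i \<in> borel_measurable M"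
    and "prob_space.indep_vars M (\<lambda>_. borel) X {1..}"
    and "\<And>i y. i \<ge> 1 \<Longrightarrow> y \<in> (grid_set n :: (real ^ 'd) set) \<Longrightarrow>
            measure M {\<omega> \<in> space M. X i \<omega> = y} = 1 / real (card (grid_set n :: (real ^ 'd) set))"
  shows "\<exists>l::nat. l \<ge> 1 \<and>
    (\<forall>y :: nat \<Rightarrow> 'a \<Rightarrow> real ^ 'd.
       (\<forall>i\<ge>1. y i \<in> measurable (past_sigma M X i) borel) \<longrightarrow>
       measure M {\<omega> \<in> space M.
          sep_number n (\<Union>i\<in>{1..l}. {X i \<omega> + y i \<omega>})
            < card (grid_set n :: (real ^ 'd) set)}
         \<le> 1 / (real k * 2 ^ n))"
proof -
  define s where "s = card (grid_set n :: (real ^ 'd) set)"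
  have "\<bar>(real s - 1/2) / real s\<bar> < 1" "1 / (real k * 2 ^ n) > 0"
    using card_grid_set_ge_1[where 'd='d, of n] \<open>k \<ge> 1\<close> by (simp_all add: s_def)
  then obtain l where "l \<ge> 1" and l: "((real s - 1/2) / real s) ^ l * (2 * real s) ^ s \<le> 1 / (real k * 2 ^ n)"
    by (rule exists_power_mult_le)
  show ?thesis
  proof (intro exI[of _ l] conjI allI impI)
    fix y :: "nat \<Rightarrow> 'a \<Rightarrow> real ^ 'd"
    assume "\<forall>i\<ge>1. y i \<in> measurable (past_sigma M X i) borel"
    then interpret predictable_shifts_of_uniform_samples M "grid_set n :: (real ^ 'd) set" n X y
      using assms by (intro grid_samples_with_predictable_shifts) auto
    have "prob {\<omega> \<in> space M. sep_number n (points l \<omega>) < s} \<le> 1 / (real k * 2 ^ n)"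
      using prob_sep_number_less_le[of l] l unfolding s_def by linarith
    then show "measure M {\<omega> \<in> space M. sep_number n (\<Union>i\<in>{1..l}. {X i \<omega> + y i \<omega>})
            < card (grid_set n :: (real ^ 'd) set)} \<le> 1 / (real k * 2 ^ n)"
      by (simp add: points_def s_def)
  qed fact
qed

end
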